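(* Assume $r\neq0$ and $r+s=0$. Then: (i) For $0\le i\le d-1$: $\bar b^*_i=b^*_{2i}b^*_{2i+1}$ if $0\le i\le\lfloor d/2\rfloor-1$; $\bar b^*_i=\frac{(d+1)r}{2}b^*_{d-1}$ if $i=\lfloor d/2\rfloor$ and $d$ is odd; $\bar b^*_i=\frac{(d+1)r}{2}c^*_d$ if $i=\lfloor d/2\rfloor$ and $d$ is even; $\bar b^*_i=c^*_{2(d-i)}c^*_{2(d-i)+1}$ if $\lfloor d/2\rfloor+1\le i\le d-1$. (ii) For $1\le i\le d$: $\bar c^*_i=c^*_{2i}c^*_{2i-1}$ if $1\le i\le\lfloor d/2\rfloor$; $\bar c^*_i=\frac{(d+1)r}{2}c^*_d$ if $i=\lfloor d/2\rfloor+1$ and $d$ is odd; $\bar c^*_i=\frac{(d+1)r}{2}b^*_{d-1}$ if $i=\lfloor d/2\rfloor+1$ and $d$ is even; $\bar c^*_i=b^*_{2(d-i+1)}b^*_{2(d-i)+1}$ if $\lfloor d/2\rfloor+2\le i\le d$. (iii) For $0\le i\le d$: $\bar k^*_i=k^*_{2i}$ if $0\le i\le\lfloor d/2\rfloor$, and $\bar k^*_i=k^*_{2(d-i)+1}$ if $\lfloor d/2\rfloor+1\le i\le d$.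
   Context: Fix an integer $d\ge0$ and $r,s\in(-1,\infty)$. Write $(x)_i=x(x+1)\cdots(x+i-1)$, $(x)_0=1$. Put $b^*_i=\frac{(d-i)(i-d-s)(2d-2i+r+s+2)_i}{(2d-2i+r+s)_{i+1}}$ ($0\le i\le d-1$), $c^*_i=\frac{i(i-d-r-1)(d-i+r+s+1)_{d-i}}{(d-i+r+s+2)_{d-i+1}}$ ($1\le i\le d$), $k^*_i=\frac{b^*_0\cdots b^*_{i-1}}{c^*_1\cdots c^*_i}$ ($0\le i\le d$). Put $\bar b^*_i=\frac{(d-i)(2d-2i+1)(d-2i-r-1)(d-2i-r)}{2(2d-4i-1)(2d-4i+1)}$ ($0\le i\le d-1$), $\bar c^*_i=\frac{i(2i-1)(d-2i+r+1)(d-2i+r+2)}{2(2d-4i+1)(2d-4i+3)}$ ($1\le i\le d$), and $\bar k^*_i=\frac{\bar b^*_0\cdots\bar b^*_{i-1}}{\bar c^*_1\cdots\bar c^*_i}$ ($0\le i\le d$). *)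

theory Defs
  imports Complex_Main
begin

definition bst :: "nat \<Rightarrow> real \<Rightarrow> real \<Rightarrow> nat \<Rightarrow> real" where
  "bst d r s i = (real d - real i) * (real i - real d - s)
     * pochhammer (2 * real d - 2 * real i + r + s + 2) i
     / pochhammer (2 * real d - 2 * real i + r + s) (i + 1)"

definition cst :: "nat \<Rightarrow> real \<Rightarrow> real \<Rightarrow> nat \<Rightarrow> real" where
  "cst d r s i = real i * (real i - real d - r - 1)
     * pochhammer (real d - real i + r + s + 1) (d - i)
     / pochhammer (real d - real i + r + s + 2) (d - i + 1)"

definition kst :: "nat \<Rightarrow> real \<Rightarrow> real \<Rightarrow> nat \<Rightarrow> real" where
  "kst d r s i = (\<Prod>j<i. bst d r s j) / (\<Prod>j\<in>{1..i}. cst d r s j)"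

definition bbst :: "nat \<Rightarrow> real \<Rightarrow> nat \<Rightarrow> real" where
  "bbst d r i = (real d - real i) * (2 * real d - 2 * real i + 1)
     * (real d - 2 * real i - r - 1) * (real d - 2 * real i - r)
     / (2 * (2 * real d - 4 * real i - 1) * (2 * real d - 4 * real i + 1))"

definition bcst :: "nat \<Rightarrow> real \<Rightarrow> nat \<Rightarrow> real" where
  "bcst d r i = real i * (2 * real i - 1)
     * (real d - 2 * real i + r + 1) * (real d - 2 * real i + r + 2)
     / (2 * (2 * real d - 4 * real i + 1) * (2 * real d - 4 * real i + 3))"

definition bkst :: "nat \<Rightarrow> real \<Rightarrow> nat \<Rightarrow> real" where
  "bkst d r i = (\<Prod>j<i. bbst d r j) / (\<Prod>j\<in>{1..i}. bcst d r j)"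

end

theory Submission
  imports Defs
begin

text \<open>For s = -r the Pochhammer quotients in b*_i and c*_i collapse to rational functions of i:
  b*_i = (i - d + r)(2d - i + 1) / (2(2d - 2i + 1)) and c*_i = i(i - d - r - 1) / (2(2d - 2i + 1)).
  With these closed forms (i) and (ii) become identities of rational functions. Part (iii) is an
  induction along the recurrences k_(i+1) = k_i b_i / c_(i+1): below the middle, one step of the
  barred k multiplies by exactly two steps of k*; at the middle the common factor (d + 1)r/2 of
  (i) and (ii) cancels; above it, one step undoes two steps of k*, walking k*_(2(d-i)+1) back down.
  These cancellations need r, b*_j and c*_j to be nonzero, which is where r \<noteq> 0 and
  -1 < r < 1 (from s > -1) enter.\<close>

lemma pochhammer_plus2_div_pochhammer:
  fixes x :: "'a :: linordered_field"
  assumes "x > 0"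
  shows "pochhammer (x + 2) n / pochhammer x (n + 1) = (x + of_nat n + 1) / (x * (x + 1))"
proof -
  have "x * (x + 1) * pochhammer (x + 2) n = pochhammer x (n + 2)"
    by (simp add: pochhammer_rec algebra_simps numeral_2_eq_2)
  also have "\<dots> = pochhammer x (n + 1) * (x + of_nat n + 1)"
    by (simp add: pochhammer_Suc algebra_simps numeral_2_eq_2)
  finally have "pochhammer (x + 2) n * (x * (x + 1)) = (x + of_nat n + 1) * pochhammer x (n + 1)"
    by (simp add: ac_simps)
  moreover have "pochhammer x (n + 1) > 0"
    using assms by (simp add: pochhammer_pos)
  ultimately show ?thesis
    using assms by (simp add: frac_eq_eq)
qed

lemma pochhammer_div_pochhammer_plus1:
  fixes y :: "'a :: linordered_field"
  assumes "y > 0"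
  shows "pochhammer y n / pochhammer (y + 1) (n + 1) = y / ((y + of_nat n) * (y + of_nat n + 1))"
proof -
  have "pochhammer y n * ((y + of_nat n) * (y + of_nat n + 1))
      = y * pochhammer (y + 1) n * (y + of_nat n + 1)"
    by (metis pochhammer_rec pochhammer_Suc mult.assoc)
  also have "\<dots> = y * pochhammer (y + 1) (n + 1)"
    by (simp add: pochhammer_Suc algebra_simps)
  finally have "pochhammer y n * ((y + of_nat n) * (y + of_nat n + 1))
      = y * pochhammer (y + 1) (n + 1)" .
  moreover have "pochhammer (y + 1) (n + 1) > 0" "y + of_nat n > 0"
    using assms by (simp_all add: pochhammer_pos add_pos_nonneg)
  ultimately show ?thesis
    by (simp add: frac_eq_eq)
qed

lemma bst_minus_closed_form:
  assumes "i < d"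
  shows "bst d r (-r) i
    = (real i - real d + r) * (2 * real d - real i + 1) / (2 * (2 * real d - 2 * real i + 1))"
proof -
  define x where "x = 2 * real d - 2 * real i"
  have x: "x > 0" using assms by (simp add: x_def)
  have "bst d r (-r) i = (real d - real i) * (real i - real d + r)
      * (pochhammer (x + 2) i / pochhammer x (i + 1))"
    by (simp add: bst_def x_def)
  also have "\<dots> = (real d - real i) * (real i - real d + r) * ((x + real i + 1) / (x * (x + 1)))"
    using x by (simp only: pochhammer_plus2_div_pochhammer)
  also have "\<dots>
      = (real i - real d + r) * (2 * real d - real i + 1) / (2 * (2 * real d - 2 * real i + 1))"
    using x by (simp add: x_def frac_eq_eq)
      (simp add: algebra_simps)
  finally show ?thesis .
qed

lemma cst_minus_closed_form:
  assumes "i \<le> d"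
  shows "cst d r (-r) i = real i * (real i - real d - r - 1) / (2 * (2 * real d - 2 * real i + 1))"
proof -
  define y where "y = real d - real i + 1"
  have y: "y > 0" using assms by (simp add: y_def)
  have "cst d r (-r) i = real i * (real i - real d - r - 1)
      * (pochhammer y (d - i) / pochhammer (y + 1) (d - i + 1))"
    by (simp add: cst_def y_def add_ac)
  also have "\<dots> = real i * (real i - real d - r - 1)
      * (y / ((y + real (d - i)) * (y + real (d - i) + 1)))"
    using y by (simp only: pochhammer_div_pochhammer_plus1)
  also have "\<dots> = real i * (real i - real d - r - 1) / (2 * (2 * real d - 2 * real i + 1))"
    using y assms by (simp add: y_def of_nat_diff frac_eq_eq)
      (simp add: algebra_simps)
  finally show ?thesis .
qed

lemma bbst_eq_bst_pair:
  assumes "2 * i + 1 < d"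
  shows "bbst d r i = bst d r (-r) (2 * i) * bst d r (-r) (2 * i + 1)"
proof -
  have "2 * real d - 4 * real i - 1 > 0" using assms by linarith
  then show ?thesis
    using assms by (simp add: bst_minus_closed_form bbst_def frac_eq_eq)
      (simp add: algebra_simps)
qed

lemma bbst_eq_cst_pair:
  assumes "d < 2 * i" "i \<le> d"
  shows "bbst d r i = cst d r (-r) (2 * (d - i)) * cst d r (-r) (2 * (d - i) + 1)"
proof -
  have "2 * real d - 4 * real i + 1 < 0" using assms by linarith
  then show ?thesis
    using assms by (simp add: cst_minus_closed_form bbst_def of_nat_diff frac_eq_eq)
      (simp add: algebra_simps)
qed

lemma bcst_eq_cst_pair:
  assumes "1 \<le> i" "2 * i \<le> d"
  shows "bcst d r i = cst d r (-r) (2 * i) * cst d r (-r) (2 * i - 1)"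
proof -
  have "2 * real d - 4 * real i + 1 > 0" using assms by linarith
  then show ?thesis
    using assms by (simp add: cst_minus_closed_form bcst_def of_nat_diff frac_eq_eq)
      (simp add: algebra_simps)
qed

lemma bcst_eq_bst_pair:
  assumes "d + 2 < 2 * i" "i \<le> d"
  shows "bcst d r i = bst d r (-r) (2 * (d - i + 1)) * bst d r (-r) (2 * (d - i) + 1)"
proof -
  have "2 * real d - 4 * real i + 3 < 0" using assms by linarith
  then show ?thesis
    using assms by (simp add: bst_minus_closed_form bcst_def of_nat_diff frac_eq_eq)
      (simp add: algebra_simps)
qed

lemma bbst_middle_odd:
  assumes "odd d"
  shows "bbst d r (d div 2) = (real d + 1) * r / 2 * bst d r (-r) (d - 1)"
proof -
  obtain m where "d = 2 * m + 1" using assms oddE by blast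
  then show ?thesis by (simp add: bst_minus_closed_form bbst_def field_simps)
qed

lemma bbst_middle_even:
  assumes "even d"
  shows "bbst d r (d div 2) = (real d + 1) * r / 2 * cst d r (-r) d"
proof -
  obtain m where "d = 2 * m" using assms evenE by blast
  then show ?thesis by (simp add: cst_minus_closed_form bbst_def field_simps)
qed

lemma bcst_middle_odd:
  assumes "odd d"
  shows "bcst d r (d div 2 + 1) = (real d + 1) * r / 2 * cst d r (-r) d"
proof -
  obtain m where "d = 2 * m + 1" using assms oddE by blast
  then show ?thesis by (simp add: cst_minus_closed_form bcst_def field_simps)
qed

lemma bcst_middle_even:
  assumes "even d" "d > 0"
  shows "bcst d r (d div 2 + 1) = (real d + 1) * r / 2 * bst d r (-r) (d - 1)"
proof -
  obtain m where "d = 2 * m" "m \<ge> 1" using assms evenE by force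
  then show ?thesis by (simp add: bst_minus_closed_form bcst_def of_nat_diff field_simps)
qed

lemma bst_minus_nonzero:
  assumes "r < 1" "i < d"
  shows "bst d r (-r) i \<noteq> 0"
proof -
  have "real i - real d + r < 0" "2 * real d - real i + 1 > 0" "2 * real d - 2 * real i + 1 > 0"
    using assms by linarith+
  then show ?thesis using assms by (simp add: bst_minus_closed_form)
qed

lemma cst_minus_nonzero:
  assumes "r > -1" "1 \<le> i" "i \<le> d"
  shows "cst d r (-r) i \<noteq> 0"
proof -
  have "real i - real d - r - 1 < 0" "real i > 0" "2 * real d - 2 * real i + 1 > 0"
    using assms by linarith+
  then show ?thesis using assms by (simp add: cst_minus_closed_form)
qed

lemma kst_Suc: "kst d r s (Suc n) = kst d r s n * bst d r s n / cst d r s (Suc n)"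
  unfolding kst_def by (simp add: atLeastAtMostSuc_conv)

lemma kst_Suc_Suc:
  "kst d r s (Suc (Suc n)) = kst d r s n * (bst d r s n * bst d r s (Suc n))
     / (cst d r s (Suc n) * cst d r s (Suc (Suc n)))"
  by (simp add: kst_Suc)

lemma bkst_Suc: "bkst d r (Suc n) = bkst d r n * bbst d r n / bcst d r (Suc n)"
  unfolding bkst_def by (simp add: atLeastAtMostSuc_conv)

lemma bkst_lower_half:
  assumes "i \<le> d div 2"
  shows "bkst d r i = kst d r (-r) (2 * i)"
  using assms
proof (induction i)
  case 0
  then show ?case by (simp add: bkst_def kst_def)
next
  case (Suc i)
  have "bbst d r i = bst d r (-r) (2 * i) * bst d r (-r) (Suc (2 * i))"
    using Suc.prems by (simp add: bbst_eq_bst_pair)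
  moreover have "bcst d r (Suc i) = cst d r (-r) (Suc (Suc (2 * i))) * cst d r (-r) (Suc (2 * i))"
    using Suc.prems bcst_eq_cst_pair[of "Suc i" d r] by simp
  ultimately show ?case
    using Suc by (simp add: bkst_Suc kst_Suc_Suc mult.commute)
qed

lemma bkst_middle:
  assumes "-1 < r" "r < 1" "r \<noteq> 0" "d > 0"
  shows "bkst d r (d div 2 + 1) = kst d r (-r) (2 * (d - (d div 2 + 1)) + 1)"
proof -
  define K where "K = (real d + 1) * r / 2"
  have "K \<noteq> 0" using assms by (simp add: K_def add_pos_nonneg)
  have bkst_mid: "bkst d r (d div 2 + 1)
      = kst d r (-r) (2 * (d div 2)) * bbst d r (d div 2) / bcst d r (d div 2 + 1)"
    by (simp add: bkst_Suc bkst_lower_half)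
  have kst_d: "kst d r (-r) d = kst d r (-r) (d - 1) * bst d r (-r) (d - 1) / cst d r (-r) d"
    using kst_Suc[of d r "-r" "d - 1"] assms by simp
  show ?thesis
  proof (cases "even d")
    case True
    have "bst d r (-r) (d - 1) \<noteq> 0" "cst d r (-r) d \<noteq> 0"
      using assms by (simp_all add: bst_minus_nonzero cst_minus_nonzero)
    have "bkst d r (d div 2 + 1) = kst d r (-r) d * (K * cst d r (-r) d) / (K * bst d r (-r) (d - 1))"
      unfolding bkst_mid bbst_middle_even[OF True] bcst_middle_even[OF True \<open>d > 0\<close>]
      using True by (simp flip: K_def)
    also have "\<dots> = kst d r (-r) (d - 1)"
      using \<open>K \<noteq> 0\<close> \<open>bst d r (-r) (d - 1) \<noteq> 0\<close> \<open>cst d r (-r) d \<noteq> 0\<close>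
      by (simp add: kst_d)
    also have "d - 1 = 2 * (d - (d div 2 + 1)) + 1"
      using True assms by auto
    finally show ?thesis .
  next
    case False
    have "2 * (d div 2) = d - 1" "2 * (d - (d div 2 + 1)) + 1 = d"
      using False by presburger+
    then show ?thesis
      unfolding bkst_mid bbst_middle_odd[OF False] bcst_middle_odd[OF False]
      using \<open>K \<noteq> 0\<close> assms by (simp add: kst_d flip: K_def)
  qed
qed

lemma bkst_upper_half:
  assumes "-1 < r" "r < 1" "r \<noteq> 0" "d div 2 + 1 \<le> i" "i \<le> d"
  shows "bkst d r i = kst d r (-r) (2 * (d - i) + 1)"
  using assms(4,5)
proof (induction i rule: dec_induct)
  case base
  then show ?case using bkst_middle assms(1-3) by simp
next
  case (step n)
  define m where "m = 2 * (d - Suc n) + 1"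
  have m: "2 * (d - n) = Suc m" "Suc (Suc m) \<le> d"
    using step by (auto simp: m_def)
  have "bkst d r (Suc n) = kst d r (-r) (Suc (Suc m)) * bbst d r n / bcst d r (Suc n)"
    using step m by (simp add: bkst_Suc)
  also have "\<dots> = kst d r (-r) (Suc (Suc m))
      * (cst d r (-r) (Suc m) * cst d r (-r) (Suc (Suc m))) / (bst d r (-r) (Suc m) * bst d r (-r) m)"
    using step m bbst_eq_cst_pair[of d n r] bcst_eq_bst_pair[of d "Suc n" r]
    by (simp add: m_def)
  also have "\<dots> = kst d r (-r) m"
    using m assms(1,2)
    by (simp add: kst_Suc_Suc bst_minus_nonzero cst_minus_nonzero mult.commute)
  finally show ?case by (simp add: m_def)
qed

lemma bbst_factorization:
  "\<forall>i. i < d \<longrightarrow>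
    (i < d div 2 \<longrightarrow> bbst d r i = bst d r (-r) (2*i) * bst d r (-r) (2*i+1)) \<and>
    (i = d div 2 \<and> odd d \<longrightarrow> bbst d r i = (real d + 1) * r / 2 * bst d r (-r) (d - 1)) \<and>
    (i = d div 2 \<and> even d \<longrightarrow> bbst d r i = (real d + 1) * r / 2 * cst d r (-r) d) \<and>
    (d div 2 + 1 \<le> i \<longrightarrow> bbst d r i = cst d r (-r) (2*(d-i)) * cst d r (-r) (2*(d-i)+1))"
  using bbst_eq_bst_pair[of _ d r] bbst_eq_cst_pair[of d _ r]
    bbst_middle_odd[of d r] bbst_middle_even[of d r]
  by auto

lemma bcst_factorization:
  "\<forall>i. 1 \<le> i \<and> i \<le> d \<longrightarrow>
    (i \<le> d div 2 \<longrightarrow> bcst d r i = cst d r (-r) (2*i) * cst d r (-r) (2*i-1)) \<and>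
    (i = d div 2 + 1 \<and> odd d \<longrightarrow> bcst d r i = (real d + 1) * r / 2 * cst d r (-r) d) \<and>
    (i = d div 2 + 1 \<and> even d \<longrightarrow> bcst d r i = (real d + 1) * r / 2 * bst d r (-r) (d - 1)) \<and>
    (d div 2 + 2 \<le> i \<longrightarrow> bcst d r i = bst d r (-r) (2*(d-i+1)) * bst d r (-r) (2*(d-i)+1))"
  using bcst_eq_cst_pair[of _ d r] bcst_eq_bst_pair[of d _ r]
    bcst_middle_odd[of d r] bcst_middle_even[of d r]
  by auto

lemma bkst_eq_kst:
  assumes "-1 < r" "r < 1" "r \<noteq> 0"
  shows "\<forall>i. i \<le> d \<longrightarrow>
    (i \<le> d div 2 \<longrightarrow> bkst d r i = kst d r (-r) (2*i)) \<and>
    (d div 2 + 1 \<le> i \<longrightarrow> bkst d r i = kst d r (-r) (2*(d-i)+1))"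
  using assms bkst_lower_half bkst_upper_half by blast

theorem lemma3p3:
  fixes d :: nat and r s :: real
  assumes "r > -1" and "s > -1" and "r \<noteq> 0" and "r + s = 0"
  shows
   "(\<forall>i. i < d \<longrightarrow>
        (i < d div 2 \<longrightarrow> bbst d r i = bst d r s (2*i) * bst d r s (2*i+1)) \<and>
        (i = d div 2 \<and> odd d \<longrightarrow> bbst d r i = (real d + 1) * r / 2 * bst d r s (d - 1)) \<and>
        (i = d div 2 \<and> even d \<longrightarrow> bbst d r i = (real d + 1) * r / 2 * cst d r s d) \<and>
        (d div 2 + 1 \<le> i \<longrightarrow> bbst d r i = cst d r s (2*(d-i)) * cst d r s (2*(d-i)+1)))
    \<and> (\<forall>i. 1 \<le> i \<and> i \<le> d \<longrightarrow>
        (i \<le> d div 2 \<longrightarrow> bcst d r i = cst d r s (2*i) * cst d r s (2*i-1)) \<and>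
        (i = d div 2 + 1 \<and> odd d \<longrightarrow> bcst d r i = (real d + 1) * r / 2 * cst d r s d) \<and>
        (i = d div 2 + 1 \<and> even d \<longrightarrow> bcst d r i = (real d + 1) * r / 2 * bst d r s (d - 1)) \<and>
        (d div 2 + 2 \<le> i \<longrightarrow> bcst d r i = bst d r s (2*(d-i+1)) * bst d r s (2*(d-i)+1)))
    \<and> (\<forall>i. i \<le> d \<longrightarrow>
        (i \<le> d div 2 \<longrightarrow> bkst d r i = kst d r s (2*i)) \<and>
        (d div 2 + 1 \<le> i \<longrightarrow> bkst d r i = kst d r s (2*(d-i)+1)))"
proof -
  have s: "s = -r" and "r < 1"
    using assms by linarith+
  show ?thesis
    unfolding s using assms \<open>r < 1\<close>
    by (intro conjI bbst_factorization bcst_factorization bkst_eq_kst) auto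
qed

end
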